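(* Let $\varphi,\mu\in\mathcal{M}$. Then $\varphi\mu=\mu\varphi$ if and only if there exists $\nu\in G_M$ with $|\nu|\le 2$ such that $\mu=\nu\varphi\nu^{-1}$.
   Context: Fix $n\ge 2$, $W=\{1,\dots,n\}$, $M=\{n+1,\dots,2n\}$, $I=W\cup M$. Permutations compose right-to-left. A matching is a permutation $\mu$ of $I$ with $\mu(W)=M$, $\mu(M)=W$ and $\mu(\mu(z))=z$ for all $z\in I$; $\mathcal{M}$ is the set of matchings. $G_M=\{\nu\in\mathrm{Sym}(I):\nu(x)=x\text{ for all }x\in W\}$. $|\nu|$ denotes the order of the permutation $\nu$. *)

theory Defs
  imports "HOL-Combinatorics.Permutations"
begin

definition Wset :: "nat \<Rightarrow> nat set" where "Wset n = {1..n}"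
definition Mset :: "nat \<Rightarrow> nat set" where "Mset n = {n+1..2*n}"
definition Iset :: "nat \<Rightarrow> nat set" where "Iset n = Wset n \<union> Mset n"

text \<open>Permutations of I are functions that permute I (identity outside I); composition is f \<circ> g.\<close>

definition matchings :: "nat \<Rightarrow> (nat \<Rightarrow> nat) set" where
  "matchings n = {\<mu>. \<mu> permutes Iset n \<and> \<mu> ` Wset n = Mset n \<and> \<mu> ` Mset n = Wset n
                      \<and> (\<forall>z\<in>Iset n. \<mu> (\<mu> z) = z)}"

definition G_M :: "nat \<Rightarrow> (nat \<Rightarrow> nat) set" where
  "G_M n = {\<nu>. \<nu> permutes Iset n \<and> (\<forall>x\<in>Wset n. \<nu> x = x)}"

definition perm_order :: "(nat \<Rightarrow> nat) \<Rightarrow> nat" where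
  "perm_order \<nu> = (LEAST k. 0 < k \<and> (\<nu> ^^ k) = id)"

end

theory Submission
  imports Defs "HOL-Combinatorics.Cycles"
begin

text \<open>If \<phi> and \<mu> commute, then \<rho> = \<mu> \<phi> is an involution (\<rho> \<rho> = \<mu> \<mu> \<phi> \<phi> = id)
  mapping M to M, and its restriction \<nu> to M satisfies \<mu> = \<nu> \<phi> \<nu>. Conversely, an
  involution \<nu> \<in> G_M moves only points of M, while its conjugate \<phi> \<nu> \<phi> moves only points
  of W; permutations with such separated supports commute, and \<nu> (\<phi> \<nu> \<phi>) = (\<phi> \<nu> \<phi>) \<nu>
  is the same equation as (\<nu> \<phi> \<nu>) \<phi> = \<phi> (\<nu> \<phi> \<nu>).\<close>

lemma matchingsD:
  assumes "f \<in> matchings n"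
  shows "x \<in> Wset n \<Longrightarrow> f x \<in> Mset n"
    and "x \<in> Mset n \<Longrightarrow> f x \<in> Wset n"
    and "x \<notin> Iset n \<Longrightarrow> f x = x"
    and "f (f x) = x"
proof -
  have perm: "f permutes Iset n" and "f ` Wset n = Mset n" "f ` Mset n = Wset n"
    and invol: "\<forall>z\<in>Iset n. f (f z) = z"
    using assms unfolding matchings_def by auto
  then show "x \<in> Wset n \<Longrightarrow> f x \<in> Mset n" "x \<in> Mset n \<Longrightarrow> f x \<in> Wset n" by blast+
  show fixed: "x \<notin> Iset n \<Longrightarrow> f x = x" for x
    using perm by (rule permutes_not_in)
  show "f (f x) = x"
    using invol fixed by metis
qed

lemma Wset_disjoint_Mset: "x \<in> Wset n \<Longrightarrow> x \<notin> Mset n"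
  unfolding Wset_def Mset_def by auto

lemma in_Iset_iff: "x \<in> Iset n \<longleftrightarrow> x \<in> Wset n \<or> x \<in> Mset n"
  unfolding Iset_def by auto

lemma finite_Iset: "finite (Iset n)"
  unfolding Iset_def Wset_def Mset_def by simp

lemma perm_order_le_2_iff:
  assumes "permutation \<nu>"
  shows "perm_order \<nu> \<le> 2 \<longleftrightarrow> \<nu> \<circ> \<nu> = id"
proof
  assume invol: "\<nu> \<circ> \<nu> = id"
  show "perm_order \<nu> \<le> 2"
    unfolding perm_order_def by (rule Least_le) (simp add: invol numeral_2_eq_2)
next
  assume le: "perm_order \<nu> \<le> 2"
  obtain k where k: "\<nu> ^^ k = id" "0 < k"
    using assms by (rule permutation_is_nilpotent)
  have "0 < perm_order \<nu> \<and> \<nu> ^^ perm_order \<nu> = id"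
    unfolding perm_order_def by (rule LeastI[of _ k]) (simp add: k)
  with le have "perm_order \<nu> = 1 \<and> \<nu> = id \<or> perm_order \<nu> = 2 \<and> \<nu> ^^ 2 = id"
    by (auto simp: le_Suc_eq numeral_2_eq_2)
  then show "\<nu> \<circ> \<nu> = id"
    by (auto simp: numeral_2_eq_2)
qed

lemma G_M_preserves_Mset:
  assumes "\<nu> \<in> G_M n" and "x \<in> Mset n"
  shows "\<nu> x \<in> Mset n"
proof -
  have perm: "\<nu> permutes Iset n" and fixW: "\<And>y. y \<in> Wset n \<Longrightarrow> \<nu> y = y"
    using assms(1) unfolding G_M_def by auto
  have "\<nu> x \<in> Iset n"
    using assms(2) permutes_in_image[OF perm] in_Iset_iff by blast
  moreover have "\<nu> x \<notin> Wset n"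
  proof
    assume "\<nu> x \<in> Wset n"
    then have "\<nu> (\<nu> x) = \<nu> x" by (rule fixW)
    then have "\<nu> x = x" using permutes_inj[OF perm] by (simp add: inj_eq)
    with \<open>\<nu> x \<in> Wset n\<close> assms(2) show False by (simp add: Wset_disjoint_Mset)
  qed
  ultimately show ?thesis by (simp add: in_Iset_iff)
qed

lemma involution_in_G_M:
  assumes "\<And>x. \<nu> (\<nu> x) = x" and "\<And>x. x \<notin> Mset n \<Longrightarrow> \<nu> x = x"
  shows "\<nu> \<in> G_M n"
proof -
  have "\<nu> permutes Iset n"
    unfolding permutes_def using involuntory_imp_bij[OF assms(1)] assms(2)
    by (auto simp: bij_iff in_Iset_iff)
  then show ?thesis
    unfolding G_M_def using assms(2) Wset_disjoint_Mset by auto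
qed

lemma comp_commute_of_separated_supports:
  assumes "\<And>x. x \<in> A \<Longrightarrow> f x = x" and "\<And>x. x \<notin> A \<Longrightarrow> f x \<notin> A"
    and "\<And>x. x \<notin> A \<Longrightarrow> g x = x" and "\<And>x. x \<in> A \<Longrightarrow> g x \<in> A"
  shows "f \<circ> g = g \<circ> f"
proof
  show "(f \<circ> g) x = (g \<circ> f) x" for x
    by (cases "x \<in> A") (simp_all add: assms)
qed

lemma G_M_commutes_with_conjugate:
  assumes "\<nu> \<in> G_M n" and "\<phi> \<in> matchings n"
  shows "\<nu> \<circ> (\<phi> \<circ> \<nu> \<circ> \<phi>) = (\<phi> \<circ> \<nu> \<circ> \<phi>) \<circ> \<nu>"
proof (rule comp_commute_of_separated_supports[where A = "Wset n"])
  note \<phi> = matchingsD[OF assms(2)]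
  have fixW: "\<And>x. x \<in> Wset n \<Longrightarrow> \<nu> x = x"
    and fixI: "\<And>x. x \<notin> Iset n \<Longrightarrow> \<nu> x = x"
    using assms(1) permutes_not_in unfolding G_M_def by auto
  note preserveM = G_M_preserves_Mset[OF assms(1)]
  show "\<nu> x = x" if "x \<in> Wset n" for x
    using that by (rule fixW)
  show "\<nu> x \<notin> Wset n" if "x \<notin> Wset n" for x
  proof (cases "x \<in> Mset n")
    case True
    then show ?thesis using preserveM Wset_disjoint_Mset by blast
  next
    case False
    with that show ?thesis by (simp add: fixI in_Iset_iff)
  qed
  show "(\<phi> \<circ> \<nu> \<circ> \<phi>) x = x" if "x \<notin> Wset n" for x
  proof (cases "x \<in> Mset n")
    case True
    then show ?thesis by (simp add: \<phi>(2) fixW \<phi>(4))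
  next
    case False
    with that show ?thesis by (simp add: \<phi>(3) fixI in_Iset_iff)
  qed
  show "(\<phi> \<circ> \<nu> \<circ> \<phi>) x \<in> Wset n" if "x \<in> Wset n" for x
    using that \<phi> preserveM by simp
qed

lemma commuting_matchings_conjugate:
  assumes \<phi>: "\<phi> \<in> matchings n" and \<mu>: "\<mu> \<in> matchings n" and comm: "\<phi> \<circ> \<mu> = \<mu> \<circ> \<phi>"
  defines "\<nu> \<equiv> \<lambda>x. if x \<in> Mset n then \<mu> (\<phi> x) else x"
  shows "\<nu> \<in> G_M n" and "\<nu> \<circ> \<nu> = id" and "\<mu> = \<nu> \<circ> \<phi> \<circ> \<nu>"
proof -
  note \<phi> = matchingsD[OF \<phi>] and \<mu> = matchingsD[OF \<mu>]
  have comm': "\<phi> (\<mu> x) = \<mu> (\<phi> x)" for x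
    using comm by (metis comp_apply)
  have invol: "\<nu> (\<nu> x) = x" for x
    using \<phi> \<mu> by (auto simp: \<nu>_def comm'[symmetric])
  then show "\<nu> \<circ> \<nu> = id" by auto
  show "\<nu> \<in> G_M n"
    using invol by (rule involution_in_G_M) (simp add: \<nu>_def)
  show "\<mu> = \<nu> \<circ> \<phi> \<circ> \<nu>"
  proof
    fix x
    consider "x \<in> Wset n" | "x \<in> Mset n" | "x \<notin> Iset n"
      using in_Iset_iff by blast
    then show "\<mu> x = (\<nu> \<circ> \<phi> \<circ> \<nu>) x"
    proof cases
      case 1
      then show ?thesis using \<phi> Wset_disjoint_Mset by (simp add: \<nu>_def)
    next
      case 2
      then have "\<phi> (\<mu> (\<phi> x)) \<in> Wset n" using \<phi> \<mu> by blast
      with 2 show ?thesis using Wset_disjoint_Mset by (simp add: \<nu>_def comm' \<phi>(4))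
    next
      case 3
      then show ?thesis using \<phi> \<mu> by (simp add: \<nu>_def in_Iset_iff)
    qed
  qed
qed

theorem proposition19:
  fixes n :: nat and \<phi> \<mu> :: "nat \<Rightarrow> nat"
  assumes "n \<ge> 2"
    and "\<phi> \<in> matchings n" and "\<mu> \<in> matchings n"
  shows "\<phi> \<circ> \<mu> = \<mu> \<circ> \<phi> \<longleftrightarrow>
         (\<exists>\<nu>\<in>G_M n. perm_order \<nu> \<le> 2 \<and> \<mu> = \<nu> \<circ> \<phi> \<circ> inv \<nu>)"
proof -
  have order_iff: "perm_order \<nu> \<le> 2 \<longleftrightarrow> \<nu> \<circ> \<nu> = id" if "\<nu> \<in> G_M n" for \<nu>
    using that finite_Iset by (intro perm_order_le_2_iff) (auto simp: G_M_def permutation_permutes)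
  have inv_invol: "inv \<nu> = \<nu>" if "\<nu> \<circ> \<nu> = id" for \<nu> :: "nat \<Rightarrow> nat"
    using inv_unique_comp[OF that that] .
  show ?thesis
  proof
    assume "\<phi> \<circ> \<mu> = \<mu> \<circ> \<phi>"
    then obtain \<nu> where "\<nu> \<in> G_M n" "\<nu> \<circ> \<nu> = id" "\<mu> = \<nu> \<circ> \<phi> \<circ> \<nu>"
      using commuting_matchings_conjugate[OF assms(2,3)] by blast
    then show "\<exists>\<nu>\<in>G_M n. perm_order \<nu> \<le> 2 \<and> \<mu> = \<nu> \<circ> \<phi> \<circ> inv \<nu>"
      using order_iff inv_invol by auto
  next
    assume "\<exists>\<nu>\<in>G_M n. perm_order \<nu> \<le> 2 \<and> \<mu> = \<nu> \<circ> \<phi> \<circ> inv \<nu>"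
    then obtain \<nu> where \<nu>: "\<nu> \<in> G_M n" and "perm_order \<nu> \<le> 2" and "\<mu> = \<nu> \<circ> \<phi> \<circ> inv \<nu>"
      by blast
    then have "\<mu> = \<nu> \<circ> \<phi> \<circ> \<nu>"
      using order_iff inv_invol by auto
    then show "\<phi> \<circ> \<mu> = \<mu> \<circ> \<phi>"
      using G_M_commutes_with_conjugate[OF \<nu> assms(2)] by (simp add: comp_assoc)
  qed
qed

end
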